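(* Let $K$ be a Cantor set with metric $d$. Let $T:K\to K$ be an endomorphism (respectively a homeomorphism), let $f:K\to\mathbb{R}$ be continuous and let $\varepsilon>0$. Then there exists an endomorphism (respectively a homeomorphism) $\widetilde T:K\to K$ with $\max_{x\in K} d(T(x),\widetilde T(x))<\varepsilon$ such that $\widetilde T$ has an $f$-maximizing measure supported on a periodic orbit.
   Context: A Cantor set is a nonempty totally disconnected, perfect, compact metric space. An endomorphism of $K$ is a continuous surjection $K\to K$. For a continuous map $S:K\to K$, let $M_S(K)$ be the set of $S$-invariant Borel probability measures on $K$; a measure $\mu\in M_S(K)$ is $f$-maximizing (for $S$) if $\int_K f\,d\mu=\max_{\nu\in M_S(K)}\int_K f\,d\nu$. *)

theory Defs
  imports "HOL-Analysis.Analysis" "HOL-Probability.Probability"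
begin

definition totally_disconnected :: "'a::topological_space set \<Rightarrow> bool" where
  "totally_disconnected K \<longleftrightarrow> (\<forall>S. S \<subseteq> K \<and> connected S \<longrightarrow> (\<exists>a. S \<subseteq> {a}))"

definition cantor_set :: "'a::metric_space set \<Rightarrow> bool" where
  "cantor_set K \<longleftrightarrow> K \<noteq> {} \<and> totally_disconnected K \<and> (\<forall>x\<in>K. x islimpt K) \<and> compact K"

definition endomorphism :: "'a::topological_space set \<Rightarrow> ('a \<Rightarrow> 'a) \<Rightarrow> bool" where
  "endomorphism K T \<longleftrightarrow> continuous_on K T \<and> T ` K = K"

definition homeomorphism_of :: "'a::topological_space set \<Rightarrow> ('a \<Rightarrow> 'a) \<Rightarrow> bool" where
  "homeomorphism_of K T \<longleftrightarrow> (\<exists>g. homeomorphism K K T g)"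

definition invariant_measures :: "'a::topological_space set \<Rightarrow> ('a \<Rightarrow> 'a) \<Rightarrow> 'a measure set" where
  "invariant_measures K S = {M. prob_space M \<and> sets M = sets (restrict_space borel K) \<and>
      (\<forall>A\<in>sets M. emeasure M (S -` A \<inter> K) = emeasure M A)}"

definition maximizing_measure :: "'a::topological_space set \<Rightarrow> ('a \<Rightarrow> 'a) \<Rightarrow> ('a \<Rightarrow> real) \<Rightarrow> 'a measure \<Rightarrow> bool" where
  "maximizing_measure K S f M \<longleftrightarrow> M \<in> invariant_measures K S \<and>
      (\<forall>N\<in>invariant_measures K S. integral\<^sup>L N f \<le> integral\<^sup>L M f)"

definition supported_on_periodic_orbit :: "'a set \<Rightarrow> ('a \<Rightarrow> 'a) \<Rightarrow> 'a measure \<Rightarrow> bool" where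
  "supported_on_periodic_orbit K S M \<longleftrightarrow> (\<exists>x\<in>K. \<exists>p::nat. p \<ge> 1 \<and> (S ^^ p) x = x \<and>
      emeasure M {(S ^^ n) x | n. n < p} = 1)"

end

theory Submission
  imports Defs
begin

text \<open>Partition K into finitely many clopen sets of diameter less than \<epsilon> and consider the
  transition graph of T on the blocks, an edge C \<rightarrow> D weighted by the maximum of f over the points
  of C mapped into D. Finite graph theory gives a simple cycle of maximal mean weight c and a
  potential h with w(C,D) \<le> c + h C - h D on every edge. Clopen subsets of a Cantor set are Cantor
  sets, and Cantor sets are homogeneous, so a homeomorphism \<sigma> preserving every block can send the
  T-image of the maximising point of each cycle edge to the maximising point of the next edge.
  Then \<sigma> \<circ> T is \<epsilon>-close to T, has a periodic orbit with f-average c, and -h (block of y) is a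
  continuous subaction bounding the f-integral of every invariant measure by c; hence the measure
  equidistributed on that orbit is maximizing.\<close>

section \<open>Clopen partitions of Cantor sets\<close>

definition clopenin :: "'a::topological_space set \<Rightarrow> 'a set \<Rightarrow> bool" where
  "clopenin X C \<longleftrightarrow> openin (top_of_set X) C \<and> closedin (top_of_set X) C"

lemma clopenin_subset: "clopenin X C \<Longrightarrow> C \<subseteq> X"
  unfolding clopenin_def by (meson closedin_imp_subset)

lemma clopenin_self: "clopenin X X"
  unfolding clopenin_def by (metis closedin_topspace openin_topspace topspace_euclidean_subtopology)

lemma clopenin_diff: "clopenin X A \<Longrightarrow> clopenin X B \<Longrightarrow> clopenin X (A - B)"
  unfolding clopenin_def by (simp add: closedin_diff openin_diff)

lemma clopenin_Int: "clopenin X A \<Longrightarrow> clopenin X B \<Longrightarrow> clopenin X (A \<inter> B)"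
  unfolding clopenin_def by (simp add: closedin_Int openin_Int)

lemma clopenin_Union: "finite F \<Longrightarrow> (\<And>C. C \<in> F \<Longrightarrow> clopenin X C) \<Longrightarrow> clopenin X (\<Union>F)"
  unfolding clopenin_def by (auto intro!: openin_Union closedin_Union)

lemma clopenin_trans: "clopenin X A \<Longrightarrow> clopenin A C \<Longrightarrow> clopenin X C"
  unfolding clopenin_def by (meson openin_trans closedin_trans)

lemma quasi_component_of_set_totally_disconnected:
  fixes K :: "'a::metric_space set"
  assumes "compact K" "totally_disconnected K" "x \<in> K"
  shows "quasi_component_of_set (top_of_set K) x = {x}"
proof -
  let ?X = "top_of_set K"
  let ?Q = "quasi_component_of_set ?X x"
  have cs: "compact_space ?X" using assms(1) by (simp add: compact_space_subtopology)
  have "?Q \<in> connected_components_of ?X"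
  proof (rule compact_quasi_eq_connected_components_of[THEN iffD1])
    show "locally_compact_space ?X" using cs by (rule compact_imp_locally_compact_space)
    show "Hausdorff_space ?X" by (rule Hausdorff_space_subtopology) (rule Hausdorff_space_euclidean)
    show "compactin ?X ?Q" using cs closedin_quasi_component_of by (rule closedin_compact_space)
    show "?Q \<in> quasi_components_of ?X"
      using assms(3) unfolding quasi_components_of_def by simp
  qed
  then have "connectedin ?X ?Q"
    by (rule connectedin_connected_components_of)
  then have "connected ?Q \<and> ?Q \<subseteq> K"
    unfolding connectedin_subtopology by simp
  then obtain a where "?Q \<subseteq> {a}"
    using assms(2) unfolding totally_disconnected_def by blast
  moreover have "x \<in> ?Q" using assms(3) by simp
  ultimately show ?thesis by blast
qed

lemma clopen_neighbourhood_in_ball: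
  fixes K :: "'a::metric_space set"
  assumes K: "compact K" "totally_disconnected K" and x: "x \<in> K" and r: "r > 0"
  obtains C where "clopenin K C" "x \<in> C" "C \<subseteq> ball x r"
proof -
  let ?F = "K - ball x r"
  have "\<exists>D. clopenin K D \<and> y \<in> D \<and> x \<notin> D" if y: "y \<in> ?F" for y
  proof -
    have "y \<noteq> x" using y r by auto
    then have "\<not> quasi_component_of (top_of_set K) x y"
      using quasi_component_of_set_totally_disconnected[OF K x] by (metis mem_Collect_eq singletonD)
    then obtain D where "closedin (top_of_set K) D" "openin (top_of_set K) D" "x \<in> D" "y \<notin> D"
      using x y unfolding quasi_component_of by auto
    then have "clopenin K (K - D)" "y \<in> K - D" "x \<notin> K - D"
      using clopenin_diff[OF clopenin_self] y unfolding clopenin_def by auto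
    then show ?thesis by blast
  qed
  then obtain D where D: "\<And>y. y \<in> ?F \<Longrightarrow> clopenin K (D y) \<and> y \<in> D y \<and> x \<notin> D y"
    by metis
  have "compactin (top_of_set K) ?F"
    using K(1) by (simp add: compactin_subtopology compact_diff)
  moreover have "\<forall>U\<in>D ` ?F. openin (top_of_set K) U" "?F \<subseteq> \<Union>(D ` ?F)"
    using D unfolding clopenin_def by blast+
  ultimately obtain S where S: "finite S" "S \<subseteq> D ` ?F" "?F \<subseteq> \<Union>S"
    unfolding compactin_def by (metis (no_types, lifting))
  have "clopenin K (K - \<Union>S)"
    using S D by (intro clopenin_diff clopenin_self clopenin_Union) blast+
  moreover have "x \<in> K - \<Union>S"
    using S(2) D x by blast
  moreover have "K - \<Union>S \<subseteq> ball x r"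
    using S(3) by blast
  ultimately show thesis by (rule that)
qed

definition diam_less :: "real \<Rightarrow> 'a::metric_space set \<Rightarrow> bool" where
  "diam_less r C \<longleftrightarrow> (\<forall>u\<in>C. \<forall>v\<in>C. dist u v < r)"

definition clopen_partition :: "'a::metric_space set \<Rightarrow> real \<Rightarrow> 'a set set \<Rightarrow> bool" where
  "clopen_partition X r P \<longleftrightarrow> finite P \<and> partition_on X P \<and> (\<forall>C\<in>P. clopenin X C \<and> diam_less r C)"

lemma diam_less_subset: "diam_less r C \<Longrightarrow> D \<subseteq> C \<Longrightarrow> diam_less r D"
  unfolding diam_less_def by blast

lemma diam_less_ball: "C \<subseteq> ball x (r / 2) \<Longrightarrow> diam_less r C"
  unfolding diam_less_def subset_iff mem_ball by (metis dist_commute dist_triangle_half_l)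

lemma partition_of_finite_clopen_cover:
  assumes "finite F" "\<forall>C\<in>F. clopenin X C \<and> diam_less r C"
  shows "\<exists>P. finite P \<and> partition_on (\<Union>F) P \<and> (\<forall>C\<in>P. clopenin X C \<and> diam_less r C)"
  using assms
proof (induction F rule: finite_induct)
  case empty
  show ?case by (auto simp: partition_on_empty)
next
  case (insert A F)
  then obtain P where P: "finite P" "partition_on (\<Union>F) P" "\<forall>C\<in>P. clopenin X C \<and> diam_less r C"
    by auto
  define Q where "Q = (\<inter>) (- A) ` P - {{}}"
  have Q: "partition_on (- A \<inter> \<Union>F) Q"
    unfolding Q_def using P(2) by (rule partition_on_restrict)
  have "clopenin X (- A \<inter> C) \<and> diam_less r (- A \<inter> C)" if "C \<in> P" for C
  proof -
    have "- A \<inter> C = C - A" by blast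
    then show ?thesis
      using P(3) insert.prems that clopenin_diff diam_less_subset by (metis Diff_subset insert_iff)
  qed
  then have Qc: "\<forall>C\<in>Q. clopenin X C \<and> diam_less r C"
    unfolding Q_def by blast
  show ?case
  proof (cases "A = {}")
    case True
    then show ?thesis using P by auto
  next
    case False
    have "\<Union>(insert A F) - A = - A \<inter> \<Union>F" by blast
    then have "partition_on (\<Union>(insert A F)) (insert A Q)"
      using Q False partition_onD1[OF Q] by (subst partition_on_insert) (auto simp: disjnt_def)
    then show ?thesis
      using Qc insert.prems P(1) unfolding Q_def by (intro exI[of _ "insert A Q"]) (auto simp: Q_def)
  qed
qed

lemma clopen_partition_exists:
  fixes X :: "'a::metric_space set"
  assumes X: "compact X" "totally_disconnected X" and r: "r > 0"
  obtains P where "clopen_partition X r P"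
proof -
  have "\<exists>C. clopenin X C \<and> x \<in> C \<and> C \<subseteq> ball x (r / 2)" if "x \<in> X" for x
    using clopen_neighbourhood_in_ball[OF X that, of "r / 2"] r by auto
  then obtain C where C: "\<And>x. x \<in> X \<Longrightarrow> clopenin X (C x) \<and> x \<in> C x \<and> C x \<subseteq> ball x (r / 2)"
    by metis
  have "compactin (top_of_set X) X"
    using X(1) by (simp add: compactin_subtopology)
  moreover have "\<forall>U\<in>C ` X. openin (top_of_set X) U" "X \<subseteq> \<Union>(C ` X)"
    using C unfolding clopenin_def by blast+
  ultimately obtain S where S: "finite S" "S \<subseteq> C ` X" "X \<subseteq> \<Union>S"
    unfolding compactin_def by (metis (no_types, lifting))
  have "\<forall>D\<in>S. clopenin X D \<and> diam_less r D"
    using S(2) C diam_less_ball by blast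
  moreover have "\<Union>S = X"
    using S(2,3) C clopenin_subset by blast
  ultimately show thesis
    using partition_of_finite_clopen_cover[OF S(1)] that unfolding clopen_partition_def by metis
qed

lemma cantor_set_clopenin:
  assumes X: "cantor_set X" and C: "clopenin X C" "C \<noteq> {}"
  shows "cantor_set C"
  unfolding cantor_set_def
proof (intro conjI ballI)
  have CX: "C \<subseteq> X" using C(1) by (rule clopenin_subset)
  show "C \<noteq> {}" by (fact C(2))
  show "compact C"
    using X C(1) closedin_compact unfolding cantor_set_def clopenin_def by blast
  show "totally_disconnected C"
    using X CX unfolding cantor_set_def totally_disconnected_def by blast
  fix x assume x: "x \<in> C"
  obtain e where e: "e > 0" "ball x e \<inter> X \<subseteq> C"
    using C(1) x unfolding clopenin_def openin_contains_ball by blast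
  have "x islimpt X" using X CX x unfolding cantor_set_def by blast
  then have "x islimpt X \<inter> ball x e"
    using e(1) by (intro islimpt_Int_eventually eventually_at_in_open') auto
  then show "x islimpt C"
    using e(2) islimpt_subset by (metis inf_commute)
qed

lemma clopen_split:
  assumes X: "cantor_set X" and C: "clopenin X C" and a: "a \<in> C"
  obtains C1 C2 where "clopenin X C1" "clopenin X C2" "C1 \<noteq> {}" "C2 \<noteq> {}"
    "C1 \<inter> C2 = {}" "C1 \<union> C2 = C"
proof -
  have "a islimpt C" using cantor_set_clopenin[OF X C] a unfolding cantor_set_def by blast
  then obtain b where b: "b \<in> C" "b \<noteq> a"
    unfolding islimpt_def by blast
  have "compact X" "totally_disconnected X" "a \<in> X"
    using X clopenin_subset[OF C] a unfolding cantor_set_def by auto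
  then obtain D where D: "clopenin X D" "a \<in> D" "D \<subseteq> ball a (dist a b)"
    using clopen_neighbourhood_in_ball b(2) by (metis zero_less_dist_iff)
  then have "b \<notin> D" by auto
  show thesis
  proof (rule that)
    show "clopenin X (C \<inter> D)" "clopenin X (C - D)"
      using clopenin_Int[OF C D(1)] clopenin_diff[OF C D(1)] .
  qed (use a b D \<open>b \<notin> D\<close> in auto)
qed

lemma partition_on_split_block:
  assumes P: "partition_on X P" "C \<in> P" and C: "C1 \<union> C2 = C" "C1 \<inter> C2 = {}" "C1 \<noteq> {}" "C2 \<noteq> {}"
  shows "partition_on X (insert C1 (insert C2 (P - {C})))"
    and "finite P \<Longrightarrow> card (insert C1 (insert C2 (P - {C}))) = Suc (card P)"
proof -
  let ?P0 = "P - {C}"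
  have other: "disjnt C (\<Union>?P0)"
    using P unfolding partition_on_def disjoint_def disjnt_def by blast
  have "partition_on X (insert C ?P0)"
    using P by (simp add: insert_absorb)
  then have P0: "partition_on (X - C) ?P0" "C \<subseteq> X"
    using partition_on_insert[OF other] by auto
  have "X - C1 - C2 = X - C" using C by blast
  then have "partition_on (X - C1) (insert C2 ?P0)"
    using P0 C other by (subst partition_on_insert) (auto simp: disjnt_def)
  then show "partition_on X (insert C1 (insert C2 ?P0))"
    using P0 C other by (subst partition_on_insert) (auto simp: disjnt_def)
  have "C1 \<notin> ?P0" "C2 \<notin> ?P0" "C1 \<noteq> C2"
    using other C unfolding disjnt_def by blast+
  then show "finite P \<Longrightarrow> card (insert C1 (insert C2 ?P0)) = Suc (card P)"
    using card_Suc_Diff1[OF _ P(2)] by (metis card_insert_disjoint finite_Diff finite_insert insert_iff)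
qed

lemma clopen_partition_of_card:
  assumes X: "cantor_set X" and P: "clopen_partition X r P" and N: "card P \<le> N"
  obtains P' where "clopen_partition X r P'" "card P' = N"
proof -
  have "\<exists>P'. clopen_partition X r P' \<and> card P' = N"
    using N
  proof (induction N rule: dec_induct)
    case base
    then show ?case using P by blast
  next
    case (step n)
    then obtain P' where P': "clopen_partition X r P'" "card P' = n" by blast
    then have "P' \<noteq> {}" "partition_on X P'"
      using X unfolding clopen_partition_def cantor_set_def partition_on_def by auto
    then obtain C a where C: "C \<in> P'" "a \<in> C"
      using partition_onD3 by (metis all_not_in_conv)
    then have "clopenin X C" "diam_less r C"
      using P' unfolding clopen_partition_def by auto
    then obtain C1 C2 where S: "clopenin X C1" "clopenin X C2" "C1 \<noteq> {}" "C2 \<noteq> {}"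
      "C1 \<inter> C2 = {}" "C1 \<union> C2 = C"
      using clopen_split[OF X _ C(2)] by metis
    have "clopen_partition X r (insert C1 (insert C2 (P' - {C})))"
      using P' partition_on_split_block(1)[OF \<open>partition_on X P'\<close> C(1) S(6,5,3,4)] S
        diam_less_subset[OF \<open>diam_less r C\<close>] unfolding clopen_partition_def by auto
    moreover have "card (insert C1 (insert C2 (P' - {C}))) = Suc n"
      using partition_on_split_block(2)[OF \<open>partition_on X P'\<close> C(1) S(6,5,3,4)] P'
      unfolding clopen_partition_def by simp
    ultimately show ?case by blast
  qed
  then show thesis using that by blast
qed

lemma clopen_partition_block:
  assumes "clopen_partition X r P" "C \<in> P"
  shows "clopenin X C" "C \<noteq> {}" "C \<subseteq> X" "diam_less r C"
  using assms clopenin_subset unfolding clopen_partition_def partition_on_def by auto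


lemma clopen_partition_block_eq:
  assumes "clopen_partition X r P" "C \<in> P" "D \<in> P" "x \<in> C" "x \<in> D"
  shows "C = D"
  using assms unfolding clopen_partition_def partition_on_def disjoint_def by blast

section \<open>Homogeneity of Cantor sets\<close>

definition matched_partition ::
    "'a::metric_space set \<Rightarrow> 'a set \<Rightarrow> real \<Rightarrow> ('a set \<times> 'a set) set \<Rightarrow> bool" where
  "matched_partition X Y r R \<longleftrightarrow>
     clopen_partition X r (fst ` R) \<and> clopen_partition Y r (snd ` R) \<and> inj_on fst R \<and> inj_on snd R"

definition matching_refines :: "('a set \<times> 'b set) set \<Rightarrow> ('a set \<times> 'b set) set \<Rightarrow> bool" where
  "matching_refines R' R \<longleftrightarrow> (\<forall>p'\<in>R'. \<exists>p\<in>R. fst p' \<subseteq> fst p \<and> snd p' \<subseteq> snd p)"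

lemma matched_partition_block:
  assumes "matched_partition X Y r R" "p \<in> R"
  shows "clopenin X (fst p)" "fst p \<noteq> {}" "fst p \<subseteq> X" "diam_less r (fst p)"
    and "clopenin Y (snd p)" "snd p \<noteq> {}" "snd p \<subseteq> Y" "diam_less r (snd p)"
  using assms clopen_partition_block[of X r "fst ` R" "fst p"] clopen_partition_block[of Y r "snd ` R" "snd p"]
  unfolding matched_partition_def by auto

lemma matched_partition_swap:
  assumes "matched_partition X Y r R"
  shows "matched_partition Y X r (prod.swap ` R)"
proof -
  have "fst ` prod.swap ` R = snd ` R" "snd ` prod.swap ` R = fst ` R"
    by (simp_all add: image_image)
  moreover have "inj_on fst (prod.swap ` R)" "inj_on snd (prod.swap ` R)"
    using assms unfolding matched_partition_def by (auto intro!: inj_on_imageI simp: comp_def)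
  ultimately show ?thesis
    using assms unfolding matched_partition_def by simp
qed

lemma matching_refines_swap: "matching_refines R' R \<Longrightarrow> matching_refines (prod.swap ` R') (prod.swap ` R)"
  unfolding matching_refines_def by force

lemma matched_partition_eq_fst:
  assumes "matched_partition X Y r R" "p \<in> R" "q \<in> R" "x \<in> fst p" "x \<in> fst q"
  shows "p = q"
  using assms clopen_partition_block_eq[of X r "fst ` R" "fst p" "fst q" x]
  unfolding matched_partition_def inj_on_def by blast

lemma matched_partition_eq_snd:
  assumes "matched_partition X Y r R" "p \<in> R" "q \<in> R" "y \<in> snd p" "y \<in> snd q"
  shows "p = q"
  using assms clopen_partition_block_eq[of Y r "snd ` R" "snd p" "snd q" y]
  unfolding matched_partition_def inj_on_def by blast

lemma matched_partition_cover_fst: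
  assumes "matched_partition X Y r R" "x \<in> X"
  obtains p where "p \<in> R" "x \<in> fst p"
  using assms unfolding matched_partition_def clopen_partition_def partition_on_def by blast

lemma matched_partition_exists:
  assumes X: "cantor_set X" and Y: "cantor_set Y" and a: "a \<in> X" and b: "b \<in> Y" and r: "r > 0"
  obtains R where "matched_partition X Y r R" "\<exists>p\<in>R. a \<in> fst p \<and> b \<in> snd p"
proof -
  have "compact X" "totally_disconnected X" "compact Y" "totally_disconnected Y"
    using X Y unfolding cantor_set_def by auto
  then obtain P0 Q0 where "clopen_partition X r P0" "clopen_partition Y r Q0"
    using clopen_partition_exists r by metis
  then obtain P Q where P: "clopen_partition X r P" "card P = max (card P0) (card Q0)"
    and Q: "clopen_partition Y r Q" "card Q = max (card P0) (card Q0)"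
    using clopen_partition_of_card[OF X] clopen_partition_of_card[OF Y] by (metis max.cobounded1 max.cobounded2)
  have fin: "finite P" "finite Q"
    using P Q unfolding clopen_partition_def by auto
  obtain Pa Qb where Pa: "Pa \<in> P" "a \<in> Pa" and Qb: "Qb \<in> Q" "b \<in> Qb"
    using P(1) Q(1) a b unfolding clopen_partition_def partition_on_def by blast
  obtain f where "bij_betw f P Q"
    using finite_same_card_bij[OF fin] P(2) Q(2) by metis
  moreover have "f Pa \<in> Q"
    using calculation Pa(1) bij_betwE by blast
  ultimately have g: "bij_betw (Transposition.transpose (f Pa) Qb \<circ> f) P Q"
    using Qb(1) by (auto intro: bij_betw_trans)
  define g where "g = Transposition.transpose (f Pa) Qb \<circ> f"
  define R where "R = (\<lambda>C. (C, g C)) ` P"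
  have "fst ` R = P" "snd ` R = Q"
    using g unfolding R_def g_def bij_betw_def by (force simp: image_image)+
  moreover have "inj_on fst R" "inj_on snd R"
    using g unfolding R_def g_def bij_betw_def inj_on_def by auto
  ultimately have "matched_partition X Y r R"
    using P Q unfolding matched_partition_def by simp
  moreover have "(Pa, Qb) \<in> R"
    unfolding R_def g_def using Pa by force
  ultimately show thesis
    using that Pa Qb by fastforce
qed

lemma clopen_partition_UN:
  assumes I: "finite I" "partition_on X (A ` I)" "inj_on A I" "\<And>i. i \<in> I \<Longrightarrow> clopenin X (A i)"
    and Q: "\<And>i. i \<in> I \<Longrightarrow> clopen_partition (A i) r (Q i)"
  shows "clopen_partition X r (\<Union>i\<in>I. Q i)"
  unfolding clopen_partition_def
proof (intro conjI ballI)
  show "finite (\<Union>i\<in>I. Q i)"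
    using I(1) Q unfolding clopen_partition_def by auto
  have sub: "C \<subseteq> A i" if "i \<in> I" "C \<in> Q i" for i C
    using Q[OF that(1)] that(2) unfolding clopen_partition_def partition_on_def by auto
  show "partition_on X (\<Union>i\<in>I. Q i)"
  proof (rule partition_onI)
    have "\<Union>(\<Union>i\<in>I. Q i) = (\<Union>i\<in>I. \<Union>(Q i))" by blast
    also have "\<dots> = (\<Union>i\<in>I. A i)"
      using Q unfolding clopen_partition_def partition_on_def by simp
    finally show "\<Union>(\<Union>i\<in>I. Q i) = X"
      using I(2) unfolding partition_on_def by simp
    show "{} \<notin> (\<Union>i\<in>I. Q i)"
      using Q unfolding clopen_partition_def partition_on_def by auto
    fix C D assume C: "C \<in> (\<Union>i\<in>I. Q i)" and D: "D \<in> (\<Union>i\<in>I. Q i)" and "C \<noteq> D"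
    then obtain i j where ij: "i \<in> I" "C \<in> Q i" "j \<in> I" "D \<in> Q j" by blast
    show "disjnt C D"
    proof (cases "i = j")
      case True
      then have "disjoint (Q i)"
        using Q[OF ij(1)] unfolding clopen_partition_def partition_on_def by simp
      then show ?thesis
        using True ij \<open>C \<noteq> D\<close> disjointD unfolding disjnt_def by metis
    next
      case False
      then have "A i \<noteq> A j"
        using I(3) ij(1,3) inj_onD by metis
      then have "disjnt (A i) (A j)"
        using partition_onD2[OF I(2)] ij(1,3) disjointD unfolding disjnt_def by (metis imageI)
      then show ?thesis
        using sub[OF ij(1,2)] sub[OF ij(3,4)] disjnt_subset1 disjnt_subset2 by metis
    qed
  qed
  fix C assume "C \<in> (\<Union>i\<in>I. Q i)"
  then obtain i where "i \<in> I" "C \<in> Q i" by blast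
  then show "clopenin X C" "diam_less r C"
    using Q I(4) clopenin_trans unfolding clopen_partition_def by blast+
qed

lemma matched_partition_UN:
  assumes R: "matched_partition X Y r R"
    and Q: "\<And>p. p \<in> R \<Longrightarrow> matched_partition (fst p) (snd p) s (Q p)"
  shows "matched_partition X Y s (\<Union>p\<in>R. Q p)" and "matching_refines (\<Union>p\<in>R. Q p) R"
proof -
  have sub: "fst q \<subseteq> fst p \<and> snd q \<subseteq> snd p" if "p \<in> R" "q \<in> Q p" for p q
    using matched_partition_block(3,7)[OF Q that(2)] that(1) by blast
  then show "matching_refines (\<Union>p\<in>R. Q p) R"
    unfolding matching_refines_def by blast
  have "inj_on fst (\<Union>p\<in>R. Q p)"
  proof (rule inj_onI)
    fix q q' assume "q \<in> (\<Union>p\<in>R. Q p)" "q' \<in> (\<Union>p\<in>R. Q p)" and eq: "fst q = fst q'"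
    then obtain p p' where pp: "p \<in> R" "q \<in> Q p" "p' \<in> R" "q' \<in> Q p'" by blast
    obtain x where "x \<in> fst q"
      using matched_partition_block(2)[OF Q pp(2)] pp(1) by blast
    then have "p = p'"
      using matched_partition_eq_fst[OF R pp(1,3)] sub pp eq by blast
    then show "q = q'"
      using Q[OF pp(1)] pp eq unfolding matched_partition_def inj_on_def by blast
  qed
  moreover have "inj_on snd (\<Union>p\<in>R. Q p)"
  proof (rule inj_onI)
    fix q q' assume "q \<in> (\<Union>p\<in>R. Q p)" "q' \<in> (\<Union>p\<in>R. Q p)" and eq: "snd q = snd q'"
    then obtain p p' where pp: "p \<in> R" "q \<in> Q p" "p' \<in> R" "q' \<in> Q p'" by blast
    obtain y where "y \<in> snd q"
      using matched_partition_block(6)[OF Q pp(2)] pp(1) by blast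
    then have "p = p'"
      using matched_partition_eq_snd[OF R pp(1,3)] sub pp eq by blast
    then show "q = q'"
      using Q[OF pp(1)] pp eq unfolding matched_partition_def inj_on_def by blast
  qed
  moreover have "finite R" "inj_on fst R" "inj_on snd R"
    using R unfolding matched_partition_def clopen_partition_def by (auto dest: finite_imageD)
  then have "clopen_partition X s (\<Union>p\<in>R. fst ` Q p)" "clopen_partition Y s (\<Union>p\<in>R. snd ` Q p)"
    using R Q matched_partition_block(1,5)[OF R]
    unfolding matched_partition_def clopen_partition_def[of X r] clopen_partition_def[of Y r]
    by (auto intro!: clopen_partition_UN)
  moreover have "fst ` (\<Union>p\<in>R. Q p) = (\<Union>p\<in>R. fst ` Q p)" "snd ` (\<Union>p\<in>R. Q p) = (\<Union>p\<in>R. snd ` Q p)"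
    by blast+
  ultimately show "matched_partition X Y s (\<Union>p\<in>R. Q p)"
    unfolding matched_partition_def by simp
qed

lemma matched_partition_refine:
  assumes X: "cantor_set X" and Y: "cantor_set Y" and R: "matched_partition X Y r R"
    and ab: "\<exists>p\<in>R. a \<in> fst p \<and> b \<in> snd p" and s: "s > 0"
  obtains R' where "matched_partition X Y s R'" "\<exists>p\<in>R'. a \<in> fst p \<and> b \<in> snd p"
    "matching_refines R' R"
proof -
  obtain p0 where p0: "p0 \<in> R" "a \<in> fst p0" "b \<in> snd p0" using ab by blast
  define anchor where
    "anchor p = (if p = p0 then (a, b) else (SOME x. x \<in> fst p, SOME y. y \<in> snd p))" for p
  have anchor: "fst (anchor p) \<in> fst p" "snd (anchor p) \<in> snd p" if "p \<in> R" for p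
    using p0 matched_partition_block(2,6)[OF R that] unfolding anchor_def by (auto simp: some_in_eq)
  have "\<exists>Q. matched_partition (fst p) (snd p) s Q \<and> (\<exists>q\<in>Q. fst (anchor p) \<in> fst q \<and> snd (anchor p) \<in> snd q)"
    if "p \<in> R" for p
    using matched_partition_exists[OF cantor_set_clopenin[OF X] cantor_set_clopenin[OF Y] anchor[OF that] s]
      matched_partition_block(1,2,5,6)[OF R that] by metis
  then obtain Q where Q: "\<And>p. p \<in> R \<Longrightarrow> matched_partition (fst p) (snd p) s (Q p)"
    and Qa: "\<And>p. p \<in> R \<Longrightarrow> \<exists>q\<in>Q p. fst (anchor p) \<in> fst q \<and> snd (anchor p) \<in> snd q"
    by metis
  have "\<exists>p\<in>(\<Union>p\<in>R. Q p). a \<in> fst p \<and> b \<in> snd p"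
    using Qa[OF p0(1)] p0(1) unfolding anchor_def by auto
  then show thesis
    using that matched_partition_UN[OF R Q] by blast
qed

lemma compact_decseq_Inter_nonempty:
  fixes B :: "nat \<Rightarrow> 'a::t2_space set"
  assumes "\<And>n. compact (B n)" "\<And>n. B n \<noteq> {}" "decseq B"
  shows "(\<Inter>n. B n) \<noteq> {}"
proof -
  have "B 0 \<inter> \<Inter>(range B) \<noteq> {}"
  proof (rule compact_imp_fip)
    show "compact (B 0)" "\<And>T. T \<in> range B \<Longrightarrow> closed T"
      using assms(1) compact_imp_closed by auto
    fix F assume "finite F" "F \<subseteq> range B"
    then obtain N where N: "finite N" "F = B ` N"
      by (meson finite_subset_image)
    have "n \<le> Max (insert 0 N)" if "n \<in> insert 0 N" for n
      using N(1) that by simp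
    then have "B (Max (insert 0 N)) \<subseteq> B 0 \<inter> \<Inter>F"
      using N(2) assms(3) unfolding decseq_def by blast
    then show "B 0 \<inter> \<Inter>F \<noteq> {}"
      using assms(2) by blast
  qed
  then show ?thesis by blast
qed

lemma matching_limit_point:
  fixes S :: "nat \<Rightarrow> ('a::metric_space set \<times> 'a set) set"
  assumes Y: "compact Y" and S: "\<And>n. matched_partition X Y (1 / Suc n) (S n)"
    and refines: "\<And>n. matching_refines (S (Suc n)) (S n)" and x: "x \<in> X"
  shows "\<exists>y. \<forall>n. \<forall>p\<in>S n. x \<in> fst p \<longrightarrow> y \<in> snd p"
proof -
  define piece where "piece n = (THE p. p \<in> S n \<and> x \<in> fst p)" for n
  have piece: "piece n \<in> S n \<and> x \<in> fst (piece n)" for n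
    unfolding piece_def
    by (rule theI', metis matched_partition_cover_fst[OF S x] matched_partition_eq_fst[OF S])
  have piece_eq: "p = piece n" if "p \<in> S n" "x \<in> fst p" for n p
    using matched_partition_eq_fst[OF S that(1) _ that(2)] piece by blast
  have "snd (piece (Suc n)) \<subseteq> snd (piece n)" for n
    using refines[of n] piece[of "Suc n"] piece_eq unfolding matching_refines_def by (metis subsetD)
  then have "decseq (\<lambda>n. snd (piece n))"
    by (rule decseq_SucI)
  moreover have "compact (snd (piece n))" "snd (piece n) \<noteq> {}" for n
    using matched_partition_block(5,6)[OF S piece[THEN conjunct1]] closedin_compact[OF Y]
    unfolding clopenin_def by blast+
  ultimately obtain y where "\<forall>n. y \<in> snd (piece n)"
    using compact_decseq_Inter_nonempty[of "\<lambda>n. snd (piece n)"] by blast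
  then show ?thesis
    using piece_eq by blast
qed

lemma matching_limit_map:
  fixes S :: "nat \<Rightarrow> ('a::metric_space set \<times> 'a set) set"
  assumes Y: "compact Y" and S: "\<And>n. matched_partition X Y (1 / Suc n) (S n)"
    and refines: "\<And>n. matching_refines (S (Suc n)) (S n)"
  obtains \<phi> where "continuous_on X \<phi>" "\<phi> ` X \<subseteq> Y"
    "\<And>n p x. p \<in> S n \<Longrightarrow> x \<in> fst p \<Longrightarrow> \<phi> x \<in> snd p"
proof -
  have "\<forall>x\<in>X. \<exists>y. \<forall>n. \<forall>p\<in>S n. x \<in> fst p \<longrightarrow> y \<in> snd p"
    using matching_limit_point[OF Y S refines] by blast
  then obtain \<phi> where "\<forall>x\<in>X. \<forall>n. \<forall>p\<in>S n. x \<in> fst p \<longrightarrow> \<phi> x \<in> snd p"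
    by (rule bchoice[THEN exE])
  then have \<phi>: "\<And>x n p. x \<in> X \<Longrightarrow> p \<in> S n \<Longrightarrow> x \<in> fst p \<Longrightarrow> \<phi> x \<in> snd p"
    by blast
  have \<phi>_Y: "\<phi> x \<in> Y" if x: "x \<in> X" for x
  proof -
    obtain p where "p \<in> S 0" "x \<in> fst p"
      using matched_partition_cover_fst[OF S x] .
    then show ?thesis
      using \<phi>[OF x] matched_partition_block(7)[OF S] by blast
  qed
  have "continuous_on X \<phi>"
    unfolding continuous_on_iff
  proof (intro ballI allI impI)
    fix x and e :: real assume x: "x \<in> X" and e: "e > 0"
    obtain n where n: "1 / Suc n < e"
      using e by (metis inverse_eq_divide reals_Archimedean)
    obtain p where p: "p \<in> S n" "x \<in> fst p"
      using matched_partition_cover_fst[OF S x] by blast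
    have "openin (top_of_set X) (fst p)" "diam_less (1 / Suc n) (snd p)"
      using matched_partition_block(1,8)[OF S p(1)] unfolding clopenin_def by auto
    then obtain d where d: "d > 0" "ball x d \<inter> X \<subseteq> fst p"
      using p(2) unfolding openin_contains_ball by blast
    show "\<exists>d>0. \<forall>x'\<in>X. dist x' x < d \<longrightarrow> dist (\<phi> x') (\<phi> x) < e"
    proof (intro exI[of _ d] conjI ballI impI)
      fix x' assume "x' \<in> X" "dist x' x < d"
      then have "x' \<in> fst p"
        using d(2) by (auto simp: dist_commute)
      then have "\<phi> x' \<in> snd p" "\<phi> x \<in> snd p"
        using \<phi> p x \<open>x' \<in> X\<close> by blast+
      then show "dist (\<phi> x') (\<phi> x) < e"
        using \<open>diam_less (1 / Suc n) (snd p)\<close> n unfolding diam_less_def by fastforce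
    qed (fact d(1))
  qed
  moreover have "\<phi> x \<in> snd p" if "p \<in> S n" "x \<in> fst p" for n p x
    using \<phi> matched_partition_block(3)[OF S that(1)] that by blast
  ultimately show thesis
    using that \<phi>_Y by blast
qed

lemma matching_determines_point:
  assumes S: "\<And>n. matched_partition X Y (1 / Suc n) (S n)" and x: "x \<in> X"
    and z: "\<And>n p. p \<in> S n \<Longrightarrow> x \<in> fst p \<Longrightarrow> z \<in> fst p"
  shows "z = x"
proof (rule ccontr)
  assume "z \<noteq> x"
  then obtain n where n: "1 / Suc n < dist x z"
    by (metis inverse_eq_divide reals_Archimedean zero_less_dist_iff)
  obtain p where p: "p \<in> S n" "x \<in> fst p"
    using matched_partition_cover_fst[OF S x] by blast
  have "diam_less (1 / Suc n) (fst p)"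
    using matched_partition_block(4)[OF S p(1)] .
  then show False
    using z[OF p] p(2) n unfolding diam_less_def by fastforce
qed

lemma anchored_matching_sequence:
  assumes X: "cantor_set X" and Y: "cantor_set Y" and a: "a \<in> X" and b: "b \<in> Y"
  obtains S where "\<And>n. matched_partition X Y (1 / Suc n) (S n)"
    "\<And>n. \<exists>p\<in>S n. a \<in> fst p \<and> b \<in> snd p" "\<And>n. matching_refines (S (Suc n)) (S n)"
proof -
  define anchored where "anchored n R \<longleftrightarrow>
    matched_partition X Y (1 / Suc n) R \<and> (\<exists>p\<in>R. a \<in> fst p \<and> b \<in> snd p)" for n R
  have "\<exists>S. \<forall>n. anchored n (S n) \<and> matching_refines (S (Suc n)) (S n)"
  proof (rule dependent_nat_choice)
    obtain R where "matched_partition X Y 1 R" "\<exists>p\<in>R. a \<in> fst p \<and> b \<in> snd p"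
      using matched_partition_exists[OF X Y a b zero_less_one] .
    then show "\<exists>R. anchored 0 R"
      unfolding anchored_def by auto
    show "\<exists>R'. anchored (Suc n) R' \<and> matching_refines R' R" if "anchored n R" for n R
      using matched_partition_refine[OF X Y, of "1 / Suc n" R a b "1 / Suc (Suc n)"] that
      unfolding anchored_def by auto
  qed
  then show thesis
    using that unfolding anchored_def by blast
qed

text \<open>The homeomorphism is the common limit of ever finer matched clopen partitions of X and Y,
  each pairing a block containing a with a block containing b.\<close>

theorem cantor_set_homogeneous:
  fixes X Y :: "'a::metric_space set"
  assumes X: "cantor_set X" and Y: "cantor_set Y" and a: "a \<in> X" and b: "b \<in> Y"
  obtains \<phi> \<psi> where "homeomorphism X Y \<phi> \<psi>" "\<phi> a = b"
proof (rule anchored_matching_sequence[OF X Y a b])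
  fix S assume S: "\<And>n. matched_partition X Y (1 / Suc n) (S n)"
    and anchor: "\<And>n. \<exists>p\<in>S n. a \<in> fst p \<and> b \<in> snd p"
    and refines: "\<And>n. matching_refines (S (Suc n)) (S n)"
  define S' where "S' n = prod.swap ` S n" for n
  have S': "\<And>n. matched_partition Y X (1 / Suc n) (S' n)"
    and refines': "\<And>n. matching_refines (S' (Suc n)) (S' n)"
    unfolding S'_def using S refines matched_partition_swap matching_refines_swap by blast+
  have "compact X" "compact Y" using X Y unfolding cantor_set_def by auto
  obtain \<phi> where \<phi>: "continuous_on X \<phi>" "\<phi> ` X \<subseteq> Y"
    "\<And>n p x. p \<in> S n \<Longrightarrow> x \<in> fst p \<Longrightarrow> \<phi> x \<in> snd p"
    using matching_limit_map[OF \<open>compact Y\<close> S refines] by blast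
  obtain \<psi> where \<psi>: "continuous_on Y \<psi>" "\<psi> ` Y \<subseteq> X"
    and \<psi>': "\<And>n p y. p \<in> S' n \<Longrightarrow> y \<in> fst p \<Longrightarrow> \<psi> y \<in> snd p"
    using matching_limit_map[OF \<open>compact X\<close> S' refines'] by blast
  have \<psi>_piece: "\<psi> y \<in> fst p" if "p \<in> S n" "y \<in> snd p" for n p y
    using \<psi>'[of "prod.swap p" n y] that unfolding S'_def by auto
  have swap_piece: "\<phi> x \<in> fst p" if "p \<in> S' n" "x \<in> snd p" for n p x
    using \<phi>(3)[of "prod.swap p" n x] that unfolding S'_def by auto
  have "homeomorphism X Y \<phi> \<psi>"
  proof (rule homeomorphismI)
    show "\<psi> (\<phi> x) = x" if "x \<in> X" for x
      using matching_determines_point[OF S that] \<phi>(3) \<psi>_piece by blast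
    show "\<phi> (\<psi> y) = y" if "y \<in> Y" for y
      using matching_determines_point[OF S' that] \<psi>' swap_piece by blast
  qed (use \<phi> \<psi> in auto)
  moreover have "\<phi> a = b"
  proof (rule matching_determines_point[OF S' b])
    fix n p assume p: "p \<in> S' n" "b \<in> fst p"
    obtain q where q: "q \<in> S n" "a \<in> fst q" "b \<in> snd q"
      using anchor[of n] by blast
    have "prod.swap p \<in> S n" "b \<in> snd (prod.swap p)"
      using p unfolding S'_def by auto
    then have "q = prod.swap p"
      using matched_partition_eq_snd[OF S q(1) _ q(3)] by blast
    then show "\<phi> a \<in> fst p"
      using swap_piece[OF p(1)] q(2) by simp
  qed
  ultimately show thesis by (rule that)
qed

section \<open>Maximal mean cycles in finite graphs\<close>

definition walk :: "('v \<Rightarrow> 'v \<Rightarrow> bool) \<Rightarrow> (nat \<Rightarrow> 'v) \<Rightarrow> nat \<Rightarrow> bool" where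
  "walk E v L \<longleftrightarrow> (\<forall>k<L. E (v k) (v (Suc k)))"

definition walk_weight :: "('v \<Rightarrow> 'v \<Rightarrow> real) \<Rightarrow> (nat \<Rightarrow> 'v) \<Rightarrow> nat \<Rightarrow> real" where
  "walk_weight w v L = (\<Sum>k<L. w (v k) (v (Suc k)))"

definition closed_walk :: "('v \<Rightarrow> 'v \<Rightarrow> bool) \<Rightarrow> (nat \<Rightarrow> 'v) \<Rightarrow> nat \<Rightarrow> bool" where
  "closed_walk E v L \<longleftrightarrow> walk E v L \<and> 1 \<le> L \<and> v L = v 0"

text \<open>Cutting out the loop between two visits a < b of the same vertex.\<close>

definition shortcut :: "(nat \<Rightarrow> 'v) \<Rightarrow> nat \<Rightarrow> nat \<Rightarrow> nat \<Rightarrow> 'v" where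
  "shortcut v a b k = (if k \<le> a then v k else v (k + (b - a)))"

lemma walk_weight_cong:
  "(\<And>k. k \<le> L \<Longrightarrow> v k = v' k) \<Longrightarrow> walk_weight w v L = walk_weight w v' L"
  unfolding walk_weight_def by (rule sum.cong) auto

lemma walk_weight_minus_const: "walk_weight (\<lambda>i j. w i j - c) v L = walk_weight w v L - real L * c"
  unfolding walk_weight_def by (simp add: sum_subtractf)

lemma walk_vertex:
  assumes "\<And>i j. E i j \<Longrightarrow> i \<in> V \<and> j \<in> V" "walk E v L" "1 \<le> L" "k \<le> L"
  shows "v k \<in> V"
proof (cases "k < L")
  case True
  then show ?thesis using assms(1,2) unfolding walk_def by blast
next
  case False
  then have "k = Suc (L - 1)" "L - 1 < L" using assms(3,4) by auto
  then show ?thesis using assms(1,2) unfolding walk_def by metis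
qed

lemma walk_repeats_vertex:
  assumes "finite V" "\<And>k. k < L \<Longrightarrow> v k \<in> V" "card V < L"
  obtains a b where "a < b" "b < L" "v a = v b"
proof -
  have "card (v ` {..<L}) \<le> card V"
    using assms(1,2) by (intro card_mono) auto
  then have "\<not> inj_on v {..<L}"
    using assms(3) pigeonhole[of v "{..<L}"] by simp
  then obtain a b where "a < L" "b < L" "a \<noteq> b" "v a = v b"
    unfolding inj_on_def by blast
  then show thesis
    using that by (metis linorder_neqE_nat)
qed

lemma walk_loop:
  assumes "walk E v L" "b \<le> L"
  shows "walk E (\<lambda>k. v (a + k)) (b - a)"
  using assms unfolding walk_def by simp

lemma walk_shortcut:
  assumes w: "walk E v L" and ab: "a < b" "b \<le> L" "v a = v b"
  shows "walk E (shortcut v a b) (L - (b - a))"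
    and "shortcut v a b 0 = v 0" "shortcut v a b (L - (b - a)) = v L"
proof -
  have hi: "k \<ge> a \<Longrightarrow> shortcut v a b k = v (k + (b - a))" for k
    unfolding shortcut_def using ab by auto
  show "walk E (shortcut v a b) (L - (b - a))"
    unfolding walk_def
  proof (intro allI impI)
    fix k assume k: "k < L - (b - a)"
    show "E (shortcut v a b k) (shortcut v a b (Suc k))"
    proof (cases "k < a")
      case True
      then show ?thesis using w ab unfolding walk_def shortcut_def by simp
    next
      case False
      then show ?thesis using hi[of k] hi[of "Suc k"] w k unfolding walk_def by simp
    qed
  qed
  show "shortcut v a b 0 = v 0" unfolding shortcut_def by simp
  show "shortcut v a b (L - (b - a)) = v L"
    using hi[of "L - (b - a)"] ab by simp
qed

lemma walk_weight_shortcut: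
  assumes ab: "a < b" "b \<le> L" "v a = v b"
  shows "walk_weight w v L =
    walk_weight w (\<lambda>k. v (a + k)) (b - a) + walk_weight w (shortcut v a b) (L - (b - a))"
proof -
  define f where "f k = w (v k) (v (Suc k))" for k
  have hi: "k \<ge> a \<Longrightarrow> shortcut v a b k = v (k + (b - a))" for k
    unfolding shortcut_def using ab by auto
  have "walk_weight w (\<lambda>k. v (a + k)) (b - a) = (\<Sum>k\<in>{0..<b - a}. f (k + a))"
    unfolding walk_weight_def f_def atLeast0LessThan by (simp add: add.commute)
  also have "\<dots> = sum f {a..<b}"
    using sum.shift_bounds_nat_ivl[of f 0 a "b - a"] ab(1) by simp
  moreover have "walk_weight w (shortcut v a b) (L - (b - a)) = sum f {0..<a} + sum f {b..<L}"
  proof -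
    have "walk_weight w (shortcut v a b) (L - (b - a)) =
        (\<Sum>k\<in>{0..<a}. w (shortcut v a b k) (shortcut v a b (Suc k)))
      + (\<Sum>k\<in>{a..<L - (b - a)}. w (shortcut v a b k) (shortcut v a b (Suc k)))"
      unfolding walk_weight_def atLeast0LessThan[symmetric] using ab
      by (simp add: sum.atLeastLessThan_concat)
    also have "\<dots> = sum f {0..<a} + (\<Sum>k\<in>{a..<L - (b - a)}. f (k + (b - a)))"
    proof (intro arg_cong2[where f = "(+)"] sum.cong refl)
      show "w (shortcut v a b k) (shortcut v a b (Suc k)) = f k" if "k \<in> {0..<a}" for k
        using that unfolding f_def shortcut_def by simp
      show "w (shortcut v a b k) (shortcut v a b (Suc k)) = f (k + (b - a))" if "k \<in> {a..<L - (b - a)}" for k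
        using that hi[of k] hi[of "Suc k"] unfolding f_def by simp
    qed
    also have "(\<Sum>k\<in>{a..<L - (b - a)}. f (k + (b - a))) = sum f {a + (b - a)..<L - (b - a) + (b - a)}"
      by (rule sum.shift_bounds_nat_ivl[symmetric])
    also have "\<dots> = sum f {b..<L}"
      using ab by simp
    finally show ?thesis .
  qed
  moreover have "walk_weight w v L = sum f {0..<a} + sum f {a..<b} + sum f {b..<L}"
    unfolding walk_weight_def f_def atLeast0LessThan[symmetric] using ab
    by (simp add: sum.atLeastLessThan_concat)
  ultimately show ?thesis by simp
qed

lemma closed_walk_weight_nonpos:
  assumes fin: "finite V" and EV: "\<And>i j. E i j \<Longrightarrow> i \<in> V \<and> j \<in> V"
    and short: "\<And>v L. closed_walk E v L \<Longrightarrow> L \<le> card V \<Longrightarrow> walk_weight u v L \<le> 0"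
  shows "closed_walk E v L \<Longrightarrow> walk_weight u v L \<le> 0"
proof (induction L arbitrary: v rule: less_induct)
  case (less L)
  show ?case
  proof (cases "L \<le> card V")
    case True
    then show ?thesis using short less.prems by blast
  next
    case False
    have w: "walk E v L" "1 \<le> L" "v L = v 0"
      using less.prems unfolding closed_walk_def by auto
    have "v k \<in> V" if "k < L" for k
      using walk_vertex[OF EV w(1,2)] that by simp
    moreover have "card V < L" using False by simp
    ultimately obtain a b where ab: "a < b" "b < L" "v a = v b"
      using walk_repeats_vertex[OF fin] by metis
    have "closed_walk E (\<lambda>k. v (a + k)) (b - a)"
      using walk_loop[OF w(1)] ab unfolding closed_walk_def by simp
    then have "walk_weight u (\<lambda>k. v (a + k)) (b - a) \<le> 0"
      using less.IH[of "b - a"] ab by simp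
    moreover have "closed_walk E (shortcut v a b) (L - (b - a))"
      using walk_shortcut[OF w(1) ab(1) _ ab(3)] ab w(3) unfolding closed_walk_def by simp
    then have "walk_weight u (shortcut v a b) (L - (b - a)) \<le> 0"
      using less.IH[of "L - (b - a)"] ab by simp
    ultimately show ?thesis
      using walk_weight_shortcut[OF ab(1) _ ab(3), of L u] ab by simp
  qed
qed

lemma walk_weight_bounded:
  assumes fin: "finite V" and EV: "\<And>i j. E i j \<Longrightarrow> i \<in> V \<and> j \<in> V"
    and nonpos: "\<And>v L. closed_walk E v L \<Longrightarrow> walk_weight u v L \<le> 0"
  shows "walk E v L \<Longrightarrow> walk_weight u v L \<le> real (card V) * (\<Sum>i\<in>V. \<Sum>j\<in>V. \<bar>u i j\<bar>)"
proof (induction L arbitrary: v rule: less_induct)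
  case (less L)
  define B where "B = (\<Sum>i\<in>V. \<Sum>j\<in>V. \<bar>u i j\<bar>)"
  have edge: "u i j \<le> B" if "i \<in> V" "j \<in> V" for i j
  proof -
    have "\<bar>u i j\<bar> \<le> (\<Sum>j\<in>V. \<bar>u i j\<bar>)"
      using fin that by (intro member_le_sum) auto
    also have "\<dots> \<le> B"
      unfolding B_def using fin that by (intro member_le_sum) (auto intro: sum_nonneg)
    finally show ?thesis by simp
  qed
  show ?case
  proof (cases "L \<le> card V")
    case True
    have "walk_weight u v L \<le> (\<Sum>k<L. B)"
      unfolding walk_weight_def
      using less.prems edge EV unfolding walk_def by (intro sum_mono) auto
    also have "\<dots> \<le> real (card V) * B"
      using True edge fin by (simp add: mult_right_mono sum_nonneg B_def)
    finally show ?thesis unfolding B_def .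
  next
    case False
    then have "v k \<in> V" if "k < L" for k
      using walk_vertex[OF EV less.prems, of k] that by simp
    moreover have "card V < L" using False by simp
    ultimately obtain a b where ab: "a < b" "b < L" "v a = v b"
      using walk_repeats_vertex[OF fin] by metis
    have "closed_walk E (\<lambda>k. v (a + k)) (b - a)"
      using walk_loop[OF less.prems] ab unfolding closed_walk_def by simp
    then have "walk_weight u (\<lambda>k. v (a + k)) (b - a) \<le> 0"
      by (rule nonpos)
    moreover have "walk_weight u (shortcut v a b) (L - (b - a)) \<le> real (card V) * B"
      using less.IH[of "L - (b - a)"] walk_shortcut(1)[OF less.prems ab(1) _ ab(3)] ab
      unfolding B_def by simp
    ultimately show ?thesis
      using walk_weight_shortcut[OF ab(1) _ ab(3), of L u] ab unfolding B_def by simp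
  qed
qed

lemma potential_of_nonpos_closed_walks:
  assumes fin: "finite V" and EV: "\<And>i j. E i j \<Longrightarrow> i \<in> V \<and> j \<in> V"
    and nonpos: "\<And>v L. closed_walk E v L \<Longrightarrow> walk_weight u v L \<le> 0"
  obtains h where "\<And>i j. E i j \<Longrightarrow> u i j + h j \<le> h i"
proof
  define W where "W i = {walk_weight u v L | v L. walk E v L \<and> v 0 = i}" for i
  fix i j assume e: "E i j"
  have W_nonempty: "W i \<noteq> {}" for i
    unfolding W_def walk_def by (rule, fastforce)
  have "bdd_above (W i)" for i
    unfolding W_def bdd_above_def using walk_weight_bounded[OF fin EV nonpos] by blast
  have "z \<le> Sup (W i) - u i j" if z: "z \<in> W j" for z
  proof -
    obtain v L where v: "z = walk_weight u v L" "walk E v L" "v 0 = j"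
      using z unfolding W_def by blast
    define v' where "v' k = (case k of 0 \<Rightarrow> i | Suc k' \<Rightarrow> v k')" for k
    have "walk E v' (Suc L)"
      unfolding walk_def
    proof (intro allI impI)
      fix k assume "k < Suc L"
      then show "E (v' k) (v' (Suc k))"
        using e v(2,3) unfolding v'_def walk_def by (cases k) auto
    qed
    then have "walk_weight u v' (Suc L) \<in> W i"
      unfolding W_def v'_def by force
    then have "walk_weight u v' (Suc L) \<le> Sup (W i)"
      using \<open>bdd_above (W i)\<close> by (rule cSup_upper)
    moreover have "walk_weight u v' (Suc L) = u i j + z"
      unfolding walk_weight_def sum.lessThan_Suc_shift using v unfolding v'_def walk_weight_def by simp
    ultimately show ?thesis by simp
  qed
  then have "Sup (W j) \<le> Sup (W i) - u i j"
    using W_nonempty by (intro cSup_least) auto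
  then show "u i j + (\<lambda>i. Sup (W i)) j \<le> (\<lambda>i. Sup (W i)) i"
    by simp
qed

lemma finite_closed_walk_means:
  assumes fin: "finite V" and EV: "\<And>i j. E i j \<Longrightarrow> i \<in> V \<and> j \<in> V"
  shows "finite {walk_weight w v L / real L | v L. closed_walk E v L \<and> L \<le> N}"
proof (rule finite_subset)
  let ?m = "\<lambda>(f, L). walk_weight w f L / real L"
  show "finite (?m ` (PiE {..N} (\<lambda>_. V) \<times> {..N}))"
    using fin by (simp add: finite_PiE)
  show "{walk_weight w v L / real L | v L. closed_walk E v L \<and> L \<le> N}
      \<subseteq> ?m ` (PiE {..N} (\<lambda>_. V) \<times> {..N})"
  proof clarify
    fix v L assume v: "closed_walk E v L" "L \<le> N"
    define f where "f = restrict (\<lambda>k. if k \<le> L then v k else v 0) {..N}"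
    have "f \<in> PiE {..N} (\<lambda>_. V)"
      using v walk_vertex[OF EV] unfolding f_def closed_walk_def by auto
    moreover have "walk_weight w f L = walk_weight w v L"
      using v(2) unfolding f_def by (intro walk_weight_cong) auto
    ultimately show "walk_weight w v L / real L \<in> ?m ` (PiE {..N} (\<lambda>_. V) \<times> {..N})"
      using v(2) by (intro image_eqI[of _ _ "(f, L)"]) auto
  qed
qed

lemma short_closed_walk_exists:
  assumes fin: "finite V" and EV: "\<And>i j. E i j \<Longrightarrow> i \<in> V \<and> j \<in> V"
    and ne: "V \<noteq> {}" and out: "\<And>i. i \<in> V \<Longrightarrow> \<exists>j. E i j"
  obtains v L where "closed_walk E v L" "L \<le> card V"
proof -
  obtain i0 where i0: "i0 \<in> V" using ne by blast
  define succ where "succ i = (SOME j. E i j)" for i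
  have succ: "E i (succ i)" if "i \<in> V" for i
    unfolding succ_def using out[OF that] by (rule someI_ex)
  define v where "v k = (succ ^^ k) i0" for k
  have vV: "v k \<in> V" for k
    by (induction k) (use i0 succ EV in \<open>auto simp: v_def\<close>)
  have "walk E v L" for L
    unfolding walk_def v_def using succ vV[unfolded v_def] by simp
  obtain a b where ab: "a < b" "b < Suc (card V)" "v a = v b"
    using walk_repeats_vertex[OF fin, of "Suc (card V)" v] vV by blast
  have "closed_walk E (\<lambda>k. v (a + k)) (b - a)"
    using walk_loop[OF \<open>walk E v b\<close>] ab unfolding closed_walk_def by simp
  moreover have "b - a \<le> card V" using ab by simp
  ultimately show thesis by (rule that)
qed

lemma max_mean_closed_walk:
  assumes fin: "finite V" and EV: "\<And>i j. E i j \<Longrightarrow> i \<in> V \<and> j \<in> V"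
    and ne: "V \<noteq> {}" and out: "\<And>i. i \<in> V \<Longrightarrow> \<exists>j. E i j"
  obtains c where "\<And>v L. closed_walk E v L \<Longrightarrow> walk_weight w v L \<le> real L * c"
    and "\<exists>v L. closed_walk E v L \<and> walk_weight w v L = real L * c"
proof -
  define means where "means = {walk_weight w v L / real L | v L. closed_walk E v L \<and> L \<le> card V}"
  define c where "c = Max means"
  have "finite means"
    unfolding means_def by (rule finite_closed_walk_means[OF fin EV])
  obtain v0 L0 where "closed_walk E v0 L0" "L0 \<le> card V"
    using short_closed_walk_exists[OF fin EV ne out] .
  then have "means \<noteq> {}"
    unfolding means_def by blast
  have L_pos: "real L > 0" if "closed_walk E v L" for v L
    using that unfolding closed_walk_def by simp
  have "walk_weight (\<lambda>i j. w i j - c) v L \<le> 0" if "closed_walk E v L" for v L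
  proof (rule closed_walk_weight_nonpos[OF fin EV _ that])
    fix v L assume "closed_walk E v L" "L \<le> card V"
    then have "walk_weight w v L / real L \<le> c"
      unfolding c_def means_def using \<open>finite means\<close> means_def by (intro Max_ge) auto
    then show "walk_weight (\<lambda>i j. w i j - c) v L \<le> 0"
      using L_pos[OF \<open>closed_walk E v L\<close>] by (simp add: walk_weight_minus_const divide_le_eq mult.commute)
  qed
  then have "walk_weight w v L \<le> real L * c" if "closed_walk E v L" for v L
    using that by (simp add: walk_weight_minus_const)
  moreover have "c \<in> means"
    unfolding c_def using \<open>finite means\<close> \<open>means \<noteq> {}\<close> by (rule Max_in)
  then have "\<exists>v L. closed_walk E v L \<and> walk_weight w v L = real L * c"
    unfolding means_def using L_pos by (force simp: field_simps)
  ultimately show thesis by (rule that)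
qed

text \<open>A shortest closed walk of maximal mean is a simple cycle: a repeated vertex would split it
  into two closed walks, neither of mean above the maximum, so the shorter one attains it.\<close>

lemma simple_cycle_of_max_mean:
  assumes le: "\<And>v L. closed_walk E v L \<Longrightarrow> walk_weight w v L \<le> real L * c"
    and attained: "\<exists>v L. closed_walk E v L \<and> walk_weight w v L = real L * c"
  obtains cyc p where "closed_walk E cyc p" "inj_on cyc {..<p}" "walk_weight w cyc p = real p * c"
proof -
  define attains where "attains L \<longleftrightarrow> (\<exists>v. closed_walk E v L \<and> walk_weight w v L = real L * c)" for L
  define p where "p = (LEAST L. attains L)"
  have "attains p"
    unfolding p_def using attained LeastI_ex[of attains] unfolding attains_def by blast
  then obtain cyc where cyc: "closed_walk E cyc p" "walk_weight w cyc p = real p * c"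
    unfolding attains_def by blast
  have "inj_on cyc {..<p}"
  proof (rule ccontr)
    assume "\<not> inj_on cyc {..<p}"
    then obtain a b where ab: "a < b" "b < p" "cyc a = cyc b"
      unfolding inj_on_def by (metis lessThan_iff linorder_neqE_nat)
    have w: "walk E cyc p" "cyc p = cyc 0"
      using cyc(1) unfolding closed_walk_def by auto
    have loop: "closed_walk E (\<lambda>k. cyc (a + k)) (b - a)"
      using walk_loop[OF w(1)] ab unfolding closed_walk_def by simp
    have "closed_walk E (shortcut cyc a b) (p - (b - a))"
      using walk_shortcut[OF w(1) ab(1) _ ab(3)] ab w(2) unfolding closed_walk_def by simp
    then have "walk_weight w (shortcut cyc a b) (p - (b - a)) \<le> real (p - (b - a)) * c"
      by (rule le)
    moreover have "walk_weight w (\<lambda>k. cyc (a + k)) (b - a) \<le> real (b - a) * c"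
      using loop by (rule le)
    ultimately have "walk_weight w (\<lambda>k. cyc (a + k)) (b - a) = real (b - a) * c"
      using cyc(2) walk_weight_shortcut[OF ab(1) _ ab(3), of p w] ab
      by (simp add: of_nat_diff algebra_simps)
    then have "attains (b - a)"
      unfolding attains_def using loop by blast
    moreover have "b - a < p" using ab by simp
    ultimately show False
      unfolding p_def using not_less_Least by blast
  qed
  then show thesis using that cyc by blast
qed

lemma max_mean_cycle_with_potential:
  fixes w :: "'v \<Rightarrow> 'v \<Rightarrow> real"
  assumes fin: "finite V" and EV: "\<And>i j. E i j \<Longrightarrow> i \<in> V \<and> j \<in> V"
    and ne: "V \<noteq> {}" and out: "\<And>i. i \<in> V \<Longrightarrow> \<exists>j. E i j"
  obtains p cyc c h where "1 \<le> p" "inj_on cyc {..<p}" "\<And>k. k < p \<Longrightarrow> E (cyc k) (cyc (Suc k mod p))"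
    "(\<Sum>k<p. w (cyc k) (cyc (Suc k mod p))) = real p * c" "\<And>i j. E i j \<Longrightarrow> w i j \<le> c + h i - h j"
proof -
  obtain c where le: "\<And>v L. closed_walk E v L \<Longrightarrow> walk_weight w v L \<le> real L * c"
    and attained: "\<exists>v L. closed_walk E v L \<and> walk_weight w v L = real L * c"
    using max_mean_closed_walk[where V = V and E = E and w = w, OF fin EV ne out] by blast
  obtain cyc p where cyc: "closed_walk E cyc p" "inj_on cyc {..<p}" "walk_weight w cyc p = real p * c"
    using simple_cycle_of_max_mean[OF le attained] by blast
  have "walk_weight (\<lambda>i j. w i j - c) v L \<le> 0" if "closed_walk E v L" for v L
    using le[OF that] by (simp add: walk_weight_minus_const)
  then obtain h where h: "\<And>i j. E i j \<Longrightarrow> w i j - c + h j \<le> h i"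
    using potential_of_nonpos_closed_walks[where E = E, OF fin EV] by blast
  have wrap: "cyc (Suc k mod p) = cyc (Suc k)" if "k < p" for k
    using cyc(1) that unfolding closed_walk_def by (cases "Suc k = p") auto
  show thesis
  proof (rule that)
    show "1 \<le> p" "inj_on cyc {..<p}" using cyc unfolding closed_walk_def by auto
    show "E (cyc k) (cyc (Suc k mod p))" if "k < p" for k
      using cyc(1) that wrap unfolding closed_walk_def walk_def by simp
    show "(\<Sum>k<p. w (cyc k) (cyc (Suc k mod p))) = real p * c"
      using cyc(3) wrap unfolding walk_weight_def by simp
    show "w i j \<le> c + h i - h j" if "E i j" for i j
      using h[OF that] by simp
  qed
qed

section \<open>Invariant measures and subactions\<close>

lemma measurable_restrict_space_self:
  assumes "continuous_on K T" "T ` K \<subseteq> K"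
  shows "T \<in> measurable (restrict_space borel K) (restrict_space borel K)"
proof (rule measurable_restrict_space2)
  show "T \<in> space (restrict_space borel K) \<rightarrow> K"
    using assms(2) by (auto simp: space_restrict_space)
  show "T \<in> borel_measurable (restrict_space borel K)"
    using assms(1) by (rule borel_measurable_continuous_on_restrict)
qed

lemma integrable_continuous_on_compact:
  fixes f :: "'a::metric_space \<Rightarrow> real"
  assumes K: "compact K" and f: "continuous_on K f"
    and N: "prob_space N" "sets N = sets (restrict_space borel K)"
  shows "integrable N f"
proof -
  interpret prob_space N by (rule N(1))
  have space: "space N = K"
    using sets_eq_imp_space_eq[OF N(2)] by (simp add: space_restrict_space)
  obtain B where B: "\<And>x. x \<in> K \<Longrightarrow> norm (f x) \<le> B"
    using compact_imp_bounded[OF compact_continuous_image[OF f K]] unfolding bounded_iff by auto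
  have "f \<in> borel_measurable N"
    using borel_measurable_continuous_on_restrict[OF f] measurable_cong_sets[OF N(2) refl] by blast
  then show ?thesis
    using B space by (intro integrable_const_bound[where B = B]) auto
qed

text \<open>The coboundary g \<circ> T - g integrates to zero against every invariant measure.\<close>

lemma integral_le_of_subaction:
  fixes f g :: "'a::metric_space \<Rightarrow> real"
  assumes K: "compact K" and T: "continuous_on K T" "T ` K \<subseteq> K"
    and f: "continuous_on K f" and g: "continuous_on K g"
    and sub: "\<And>x. x \<in> K \<Longrightarrow> f x \<le> c + g (T x) - g x"
    and N: "N \<in> invariant_measures K T"
  shows "integral\<^sup>L N f \<le> c"
proof -
  let ?M = "restrict_space borel K"
  have N_prob: "prob_space N" and N_sets: "sets N = sets ?M"
    and N_inv: "\<And>A. A \<in> sets N \<Longrightarrow> emeasure N (T -` A \<inter> K) = emeasure N A"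
    using N unfolding invariant_measures_def by auto
  interpret prob_space N by (rule N_prob)
  have space: "space N = K"
    using sets_eq_imp_space_eq[OF N_sets] by (simp add: space_restrict_space)
  have T_meas: "T \<in> measurable N ?M"
    using measurable_restrict_space_self[OF T] measurable_cong_sets[OF N_sets refl] by blast
  have "distr N ?M T = N"
  proof (rule measure_eqI)
    show "sets (distr N ?M T) = sets N" using N_sets by simp
    fix A assume "A \<in> sets (distr N ?M T)"
    then show "emeasure (distr N ?M T) A = emeasure N A"
      using N_inv N_sets space by (simp add: emeasure_distr[OF T_meas])
  qed
  then have gT: "integral\<^sup>L N (\<lambda>x. g (T x)) = integral\<^sup>L N g"
    using integral_distr[OF T_meas borel_measurable_continuous_on_restrict[OF g]] by simp
  have int: "integrable N f" "integrable N g" "integrable N (\<lambda>x. g (T x))"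
    using integrable_continuous_on_compact[OF K _ N_prob N_sets] f g
      continuous_on_compose2[OF g T(1) T(2)] by auto
  have "integral\<^sup>L N f \<le> integral\<^sup>L N (\<lambda>x. c + g (T x) - g x)"
    using int sub space by (intro integral_mono) auto
  also have "\<dots> = c"
    using int gT by (simp add: prob_space)
  finally show ?thesis .
qed

lemma bij_betw_Suc_mod:
  assumes "1 \<le> (p::nat)"
  shows "bij_betw (\<lambda>k. Suc k mod p) {..<p} {..<p}"
proof (rule bij_betw_imageI)
  have Suc_mod: "Suc k mod p = (if Suc k = p then 0 else Suc k)" if "k < p" for k
    using that by auto
  show "inj_on (\<lambda>k. Suc k mod p) {..<p}"
    by (rule inj_onI) (auto simp: Suc_mod split: if_splits)
  show "(\<lambda>k. Suc k mod p) ` {..<p} = {..<p}"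
  proof
    show "{..<p} \<subseteq> (\<lambda>k. Suc k mod p) ` {..<p}"
    proof
      fix j assume j: "j \<in> {..<p}"
      show "j \<in> (\<lambda>k. Suc k mod p) ` {..<p}"
      proof (cases j)
        case 0
        then show ?thesis using assms by (intro image_eqI[of _ _ "p - 1"]) auto
      next
        case (Suc j')
        then show ?thesis using j by (intro image_eqI[of _ _ j']) auto
      qed
    qed
  qed (use assms in auto)
qed

definition periodic_orbit_measure :: "'a::topological_space set \<Rightarrow> (nat \<Rightarrow> 'a) \<Rightarrow> nat \<Rightarrow> 'a measure" where
  "periodic_orbit_measure K x p = distr (uniform_count_measure {..<p}) (restrict_space borel K) x"

context
  fixes K :: "'a::metric_space set" and T :: "'a \<Rightarrow> 'a" and x :: "nat \<Rightarrow> 'a" and p :: nat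
  assumes p: "1 \<le> p" and orbit_K: "\<And>k. k < p \<Longrightarrow> x k \<in> K"
begin

lemma orbit_measurable: "x \<in> measurable (uniform_count_measure {..<p}) (restrict_space borel K)"
proof -
  have "x \<in> measurable (count_space {..<p}) (restrict_space borel K)"
    using orbit_K by (auto simp: space_restrict_space)
  then show ?thesis
    using measurable_cong_sets[OF sets_uniform_count_measure_count_space refl] by blast
qed

lemma emeasure_periodic_orbit_measure:
  assumes "B \<in> sets (restrict_space borel K)"
  shows "emeasure (periodic_orbit_measure K x p) B = card (x -` B \<inter> {..<p}) / p"
  unfolding periodic_orbit_measure_def
  by (simp add: emeasure_distr[OF orbit_measurable assms] space_uniform_count_measure
      emeasure_uniform_count_measure)

lemma periodic_orbit_measure_invariant:
  assumes T: "continuous_on K T" "T ` K \<subseteq> K" and Tx: "\<And>k. k < p \<Longrightarrow> T (x k) = x (Suc k mod p)"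
  shows "periodic_orbit_measure K x p \<in> invariant_measures K T"
  unfolding invariant_measures_def
proof (intro CollectI conjI ballI)
  show "prob_space (periodic_orbit_measure K x p)"
    unfolding periodic_orbit_measure_def using p
    by (intro prob_space.prob_space_distr[OF _ orbit_measurable] prob_space_uniform_count_measure)
      (auto simp: lessThan_empty_iff)
  show "sets (periodic_orbit_measure K x p) = sets (restrict_space borel K)"
    unfolding periodic_orbit_measure_def by simp
  fix A assume "A \<in> sets (periodic_orbit_measure K x p)"
  then have A: "A \<in> sets (restrict_space borel K)"
    unfolding periodic_orbit_measure_def by simp
  have pre: "T -` A \<inter> K \<in> sets (restrict_space borel K)"
    using measurable_sets[OF measurable_restrict_space_self[OF T] A] by (simp add: space_restrict_space)
  have "x -` (T -` A \<inter> K) \<inter> {..<p} = {k\<in>{..<p}. x (Suc k mod p) \<in> A}"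
    using orbit_K Tx by auto
  moreover have "card {k\<in>{..<p}. x (Suc k mod p) \<in> A} = card (x -` A \<inter> {..<p})"
  proof (rule bij_betw_same_card)
    let ?s = "\<lambda>k. Suc k mod p"
    have bij: "bij_betw ?s {..<p} {..<p}" by (rule bij_betw_Suc_mod[OF p])
    have "?s ` {k\<in>{..<p}. x (?s k) \<in> A} = x -` A \<inter> {..<p}"
    proof
      show "?s ` {k\<in>{..<p}. x (?s k) \<in> A} \<subseteq> x -` A \<inter> {..<p}"
        using p by auto
      show "x -` A \<inter> {..<p} \<subseteq> ?s ` {k\<in>{..<p}. x (?s k) \<in> A}"
      proof
        fix j assume j: "j \<in> x -` A \<inter> {..<p}"
        then have "j \<in> ?s ` {..<p}"
          using bij_betw_imp_surj_on[OF bij] by blast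
        then obtain k where "k \<in> {..<p}" "j = ?s k" by blast
        then show "j \<in> ?s ` {k\<in>{..<p}. x (?s k) \<in> A}"
          using j by blast
      qed
    qed
    then show "bij_betw ?s {k\<in>{..<p}. x (?s k) \<in> A} (x -` A \<inter> {..<p})"
      using bij by (rule bij_betw_subset[rotated 2]) blast
  qed
  ultimately have "card (x -` (T -` A \<inter> K) \<inter> {..<p}) = card (x -` A \<inter> {..<p})"
    by simp
  then show "emeasure (periodic_orbit_measure K x p) (T -` A \<inter> K)
      = emeasure (periodic_orbit_measure K x p) A"
    unfolding emeasure_periodic_orbit_measure[OF pre] emeasure_periodic_orbit_measure[OF A] by simp
qed

lemma integral_periodic_orbit_measure:
  assumes "continuous_on K f"
  shows "integral\<^sup>L (periodic_orbit_measure K x p) f = (\<Sum>k<p. f (x k)) / real p"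
  unfolding periodic_orbit_measure_def
  using integral_distr[OF orbit_measurable borel_measurable_continuous_on_restrict[OF assms]]
  by (simp add: integral_uniform_count_measure)

lemma emeasure_periodic_orbit_measure_orbit:
  assumes "compact K"
  shows "emeasure (periodic_orbit_measure K x p) (x ` {..<p}) = 1"
proof -
  have "x ` {..<p} \<in> sets (restrict_space borel K)"
    using orbit_K compact_imp_closed[OF assms]
    by (auto simp: sets_restrict_space_iff finite_imp_closed)
  then have "emeasure (periodic_orbit_measure K x p) (x ` {..<p}) = card (x -` (x ` {..<p}) \<inter> {..<p}) / p"
    by (rule emeasure_periodic_orbit_measure)
  also have "x -` (x ` {..<p}) \<inter> {..<p} = {..<p}" by auto
  finally show ?thesis
    using p by (simp add: ennreal_of_nat_eq_real_of_nat)
qed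

end

lemma maximizing_periodic_orbit_of_subaction:
  fixes f g :: "'a::metric_space \<Rightarrow> real"
  assumes K: "compact K" and T: "continuous_on K T" "T ` K \<subseteq> K"
    and f: "continuous_on K f" and g: "continuous_on K g"
    and sub: "\<And>x. x \<in> K \<Longrightarrow> f x \<le> c + g (T x) - g x"
    and p: "1 \<le> p" and orbit_K: "\<And>k. k < p \<Longrightarrow> x k \<in> K"
    and Tx: "\<And>k. k < p \<Longrightarrow> T (x k) = x (Suc k mod p)"
    and mean: "(\<Sum>k<p. f (x k)) = real p * c"
  shows "\<exists>M. maximizing_measure K T f M \<and> supported_on_periodic_orbit K T M"
proof (intro exI conjI)
  let ?M = "periodic_orbit_measure K x p"
  have "integral\<^sup>L ?M f = c"
    using integral_periodic_orbit_measure[OF p orbit_K f] mean p by simp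
  then show "maximizing_measure K T f ?M"
    unfolding maximizing_measure_def
    using periodic_orbit_measure_invariant[where K = K and T = T and x = x, OF p orbit_K T Tx] integral_le_of_subaction[OF K T f g sub]
    by auto
  have iterate: "(T ^^ n) (x 0) = x (n mod p)" for n
  proof (induction n)
    case (Suc n)
    then show ?case using Tx[of "n mod p"] p by (simp add: mod_Suc_eq)
  qed simp
  then have "{(T ^^ n) (x 0) | n. n < p} = x ` {..<p}" by force
  then show "supported_on_periodic_orbit K T ?M"
    unfolding supported_on_periodic_orbit_def
    using emeasure_periodic_orbit_measure_orbit[OF p orbit_K K] orbit_K[of 0] iterate[of p] p
    by (intro bexI[of _ "x 0"] exI[of _ p]) auto
qed

section \<open>Perturbing the map\<close>

definition partition_block :: "'a set set \<Rightarrow> 'a \<Rightarrow> 'a set" where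
  "partition_block P y = (THE C. C \<in> P \<and> y \<in> C)"

lemma partition_block_eq:
  assumes "partition_on K P" "C \<in> P" "y \<in> C"
  shows "partition_block P y = C"
  unfolding partition_block_def
proof (rule the_equality)
  show "C \<in> P \<and> y \<in> C" using assms(2,3) by blast
  show "D = C" if "D \<in> P \<and> y \<in> D" for D
    using assms partition_onD2[OF assms(1)] that disjointD by blast
qed

lemma partition_block_mem:
  assumes "partition_on K P" "y \<in> K"
  shows "partition_block P y \<in> P" "y \<in> partition_block P y"
proof -
  obtain C where "C \<in> P" "y \<in> C"
    using assms partition_onD1 by blast
  then show "partition_block P y \<in> P" "y \<in> partition_block P y"
    using partition_block_eq[OF assms(1)] by auto
qed

lemma continuous_on_partition_blockwise:
  assumes P: "finite P" "partition_on K P" "\<And>C. C \<in> P \<Longrightarrow> closed C"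
    and g: "\<And>C. C \<in> P \<Longrightarrow> continuous_on C (g C)"
  shows "continuous_on K (\<lambda>y. g (partition_block P y) y)"
proof -
  have "continuous_on (\<Union>C\<in>P. C) (\<lambda>y. g (partition_block P y) y)"
  proof (rule continuous_on_closed_Union[OF P(1) P(3)])
    fix C assume C: "C \<in> P"
    show "continuous_on C (\<lambda>y. g (partition_block P y) y)"
      using g[OF C] by (rule continuous_on_cong[THEN iffD1, rotated 2])
        (auto simp: partition_block_eq[OF P(2) C])
  qed
  then show ?thesis
    using partition_onD1[OF P(2)] by simp
qed

lemma homeomorphism_partition_blockwise:
  assumes P: "finite P" "partition_on K P" "\<And>C. C \<in> P \<Longrightarrow> closed C"
    and hom: "\<And>C. C \<in> P \<Longrightarrow> homeomorphism C C (\<phi> C) (\<psi> C)"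
  shows "homeomorphism K K (\<lambda>y. \<phi> (partition_block P y) y) (\<lambda>y. \<psi> (partition_block P y) y)"
proof (rule homeomorphismI)
  show "continuous_on K (\<lambda>y. \<phi> (partition_block P y) y)"
    "continuous_on K (\<lambda>y. \<psi> (partition_block P y) y)"
    using hom unfolding homeomorphism_def by (auto intro: continuous_on_partition_blockwise[OF P])
  have maps: "\<phi> (partition_block P y) y \<in> partition_block P y"
    "\<psi> (partition_block P y) y \<in> partition_block P y"
    "\<psi> (partition_block P y) (\<phi> (partition_block P y) y) = y"
    "\<phi> (partition_block P y) (\<psi> (partition_block P y) y) = y" if "y \<in> K" for y
    using hom[OF partition_block_mem(1)[OF P(2) that]] partition_block_mem(2)[OF P(2) that]
    unfolding homeomorphism_def by auto
  then show "(\<lambda>y. \<phi> (partition_block P y) y) ` K \<subseteq> K" "(\<lambda>y. \<psi> (partition_block P y) y) ` K \<subseteq> K"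
    using partition_block_mem(1)[OF P(2)] partition_onD1[OF P(2)] by blast+
  show "\<psi> (partition_block P (\<phi> (partition_block P y) y)) (\<phi> (partition_block P y) y) = y"
    "\<phi> (partition_block P (\<psi> (partition_block P y) y)) (\<psi> (partition_block P y) y) = y"
    if "y \<in> K" for y
    using maps[OF that] partition_block_eq[OF P(2) partition_block_mem(1)[OF P(2) that]] by simp_all
qed

lemma clopen_partition_closed_block:
  assumes "compact K" "clopen_partition K r P" "C \<in> P"
  shows "closed C"
  using clopen_partition_block(1)[OF assms(2,3)] closedin_closed_trans[OF _ compact_imp_closed[OF assms(1)]]
  unfolding clopenin_def by blast

lemma homeomorphism_moving_points_in_blocks:
  fixes K :: "'a::metric_space set"
  assumes K: "cantor_set K" and P: "clopen_partition K r P"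
    and D: "inj_on D I" "\<And>i. i \<in> I \<Longrightarrow> D i \<in> P"
    and ab: "\<And>i. i \<in> I \<Longrightarrow> a i \<in> D i" "\<And>i. i \<in> I \<Longrightarrow> b i \<in> D i"
  obtains \<sigma> \<sigma>' where "homeomorphism K K \<sigma> \<sigma>'" "\<And>C y. C \<in> P \<Longrightarrow> y \<in> C \<Longrightarrow> \<sigma> y \<in> C"
    "\<And>i. i \<in> I \<Longrightarrow> \<sigma> (a i) = b i"
proof -
  have P_part: "finite P" "partition_on K P"
    using P unfolding clopen_partition_def by auto
  have "\<forall>C\<in>P. \<exists>h. homeomorphism C C (fst h) (snd h) \<and> (\<forall>i\<in>I. D i = C \<longrightarrow> fst h (a i) = b i)"
  proof
    fix C assume C: "C \<in> P"
    show "\<exists>h. homeomorphism C C (fst h) (snd h) \<and> (\<forall>i\<in>I. D i = C \<longrightarrow> fst h (a i) = b i)"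
  proof (cases "\<exists>i\<in>I. D i = C")
    case True
    then obtain i where i: "i \<in> I" "D i = C" by blast
    have "cantor_set C"
      using cantor_set_clopenin[OF K] clopen_partition_block[OF P C] by blast
    moreover have "a i \<in> C" "b i \<in> C" using ab i by auto
    ultimately obtain \<phi> \<psi> where "homeomorphism C C \<phi> \<psi>" "\<phi> (a i) = b i"
      using cantor_set_homogeneous by metis
    moreover have "j = i" if "j \<in> I" "D j = C" for j
      using D(1) i that unfolding inj_on_def by blast
    ultimately show ?thesis by (intro exI[of _ "(\<phi>, \<psi>)"]) auto
  next
    case False
    then show ?thesis using homeomorphism_ident by (intro exI[of _ "(id, id)"]) (auto simp: id_def)
  qed
  qed
  from bchoice[OF this] obtain H
    where H: "\<forall>C\<in>P. homeomorphism C C (fst (H C)) (snd (H C)) \<and> (\<forall>i\<in>I. D i = C \<longrightarrow> fst (H C) (a i) = b i)"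
    by blast
  define \<phi> where "\<phi> C = fst (H C)" for C
  define \<psi> where "\<psi> C = snd (H C)" for C
  have hom: "\<And>C. C \<in> P \<Longrightarrow> homeomorphism C C (\<phi> C) (\<psi> C)"
    and move: "\<And>C i. C \<in> P \<Longrightarrow> i \<in> I \<Longrightarrow> D i = C \<Longrightarrow> \<phi> C (a i) = b i"
    using H unfolding \<phi>_def \<psi>_def by auto
  have closed: "\<And>C. C \<in> P \<Longrightarrow> closed C"
    using clopen_partition_closed_block[OF _ P] K unfolding cantor_set_def by blast
  show thesis
  proof (rule that)
    show "homeomorphism K K (\<lambda>y. \<phi> (partition_block P y) y) (\<lambda>y. \<psi> (partition_block P y) y)"
      by (rule homeomorphism_partition_blockwise[OF P_part closed hom])
    show "\<phi> (partition_block P y) y \<in> C" if "C \<in> P" "y \<in> C" for C y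
      using hom[OF that(1)] that partition_block_eq[OF P_part(2)] unfolding homeomorphism_def by auto
    show "\<phi> (partition_block P (a i)) (a i) = b i" if "i \<in> I" for i
      using move[OF D(2) that refl] partition_block_eq[OF P_part(2) D(2) ab(1)] that by simp
  qed
qed

lemma compact_Int_vimage:
  fixes K :: "'a::metric_space set"
  assumes K: "compact K" and T: "continuous_on K T" and C: "closed C" "C \<subseteq> K" and D: "closed D"
  shows "compact (C \<inter> T -` D)"
proof -
  have "closedin (top_of_set K) (K \<inter> T -` D)"
    using continuous_closedin_preimage[OF T D] .
  then have "closed (K \<inter> T -` D)"
    using closedin_closed_trans compact_imp_closed[OF K] by blast
  then have "compact (K \<inter> (C \<inter> (K \<inter> T -` D)))"
    by (rule compact_Int_closed[OF K closed_Int[OF C(1)]])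
  moreover have "K \<inter> (C \<inter> (K \<inter> T -` D)) = C \<inter> T -` D"
    using C(2) by blast
  ultimately show ?thesis by simp
qed

lemma block_cycle_with_subaction:
  fixes f :: "'a::metric_space \<Rightarrow> real"
  assumes K: "compact K" "K \<noteq> {}" and T: "continuous_on K T" "T ` K \<subseteq> K" and f: "continuous_on K f"
    and P: "finite P" "partition_on K P" "\<And>C. C \<in> P \<Longrightarrow> closed C"
  obtains p cyc x c h where "1 \<le> p" "inj_on cyc {..<p}" "\<And>k. k < p \<Longrightarrow> cyc k \<in> P"
    "\<And>k. k < p \<Longrightarrow> x k \<in> cyc k" "\<And>k. k < p \<Longrightarrow> T (x k) \<in> cyc (Suc k mod p)"
    "(\<Sum>k<p. f (x k)) = real p * c"
    "\<And>C D y. C \<in> P \<Longrightarrow> D \<in> P \<Longrightarrow> y \<in> C \<Longrightarrow> T y \<in> D \<Longrightarrow> f y \<le> c + h C - h D"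
proof -
  define A where "A C D = C \<inter> T -` D" for C D
  define E where "E C D \<longleftrightarrow> C \<in> P \<and> D \<in> P \<and> A C D \<noteq> {}" for C D
  have block_K: "C \<subseteq> K" if "C \<in> P" for C
    using P(2) that partition_onD1 by blast
  have A_compact: "compact (A C D)" if "C \<in> P" "D \<in> P" for C D
    unfolding A_def using compact_Int_vimage[OF K(1) T(1) P(3)[OF that(1)] block_K[OF that(1)] P(3)[OF that(2)]] .
  define z where "z C D = (SOME z. z \<in> A C D \<and> (\<forall>y\<in>A C D. f y \<le> f z))" for C D
  have z: "z C D \<in> A C D \<and> (\<forall>y\<in>A C D. f y \<le> f (z C D))" if "E C D" for C D
  proof -
    have CD: "C \<in> P" "D \<in> P" "A C D \<noteq> {}" using that unfolding E_def by auto
    moreover have "A C D \<subseteq> K" unfolding A_def using block_K[OF \<open>C \<in> P\<close>] by blast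
    ultimately have "\<exists>z\<in>A C D. \<forall>y\<in>A C D. f y \<le> f z"
      using continuous_attains_sup[OF A_compact[OF CD(1,2)] CD(3) continuous_on_subset[OF f]] by blast
    then have "\<exists>z. z \<in> A C D \<and> (\<forall>y\<in>A C D. f y \<le> f z)" by blast
    then show ?thesis
      unfolding z_def by (rule someI_ex)
  qed
  have out: "\<exists>D. E C D" if C: "C \<in> P" for C
  proof -
    obtain y where y: "y \<in> C" using partition_onD3[OF P(2)] C by fastforce
    then have "T y \<in> K" using T(2) block_K[OF C] by blast
    then have "E C (partition_block P (T y))"
      unfolding E_def A_def using partition_block_mem[OF P(2)] C y by blast
    then show ?thesis by blast
  qed
  have "P \<noteq> {}" using K(2) P(2) partition_onD1 by blast
  have EV: "\<And>C D. E C D \<Longrightarrow> C \<in> P \<and> D \<in> P" unfolding E_def by blast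
  show thesis
  proof (rule max_mean_cycle_with_potential[where V = P and E = E and w = "\<lambda>C D. f (z C D)",
        OF P(1) EV \<open>P \<noteq> {}\<close> out])
    fix p cyc c h
    assume p: "1 \<le> p" and cyc: "inj_on cyc {..<p}"
      and edge: "\<And>k. k < p \<Longrightarrow> E (cyc k) (cyc (Suc k mod p))"
      and mean: "(\<Sum>k<p. f (z (cyc k) (cyc (Suc k mod p)))) = real p * c"
      and pot: "\<And>C D. E C D \<Longrightarrow> f (z C D) \<le> c + h C - h D"
  show thesis
  proof (rule that[OF p cyc _ _ _ mean])
    show "cyc k \<in> P" if "k < p" for k
      using edge[OF that] unfolding E_def by blast
    show "z (cyc k) (cyc (Suc k mod p)) \<in> cyc k" "T (z (cyc k) (cyc (Suc k mod p))) \<in> cyc (Suc k mod p)"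
      if "k < p" for k
      using z[OF edge[OF that]] unfolding A_def by auto
    show "f y \<le> c + h C - h D" if "C \<in> P" "D \<in> P" "y \<in> C" "T y \<in> D" for C D y
    proof -
      have "E C D" "y \<in> A C D" unfolding E_def A_def using that by auto
      then show ?thesis using z pot by fastforce
    qed
  qed
  qed
qed

theorem perturbation_with_maximizing_periodic_orbit:
  fixes K :: "'a::metric_space set" and f :: "'a \<Rightarrow> real"
  assumes K: "cantor_set K" and T: "continuous_on K T" "T ` K \<subseteq> K"
    and f: "continuous_on K f" and \<epsilon>: "\<epsilon> > 0"
  obtains \<sigma> \<sigma>' where "homeomorphism K K \<sigma> \<sigma>'" "\<And>y. y \<in> K \<Longrightarrow> dist y (\<sigma> y) < \<epsilon>"
    "\<exists>M. maximizing_measure K (\<sigma> \<circ> T) f M \<and> supported_on_periodic_orbit K (\<sigma> \<circ> T) M"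
proof -
  have K_compact: "compact K" and "K \<noteq> {}" and "totally_disconnected K"
    using K unfolding cantor_set_def by auto
  obtain P where P: "clopen_partition K \<epsilon> P"
    using clopen_partition_exists[OF K_compact \<open>totally_disconnected K\<close> \<epsilon>] .
  have P_part: "finite P" "partition_on K P"
    using P unfolding clopen_partition_def by auto
  have P_closed: "\<And>C. C \<in> P \<Longrightarrow> closed C"
    using clopen_partition_closed_block[OF K_compact P] .
  show thesis
  proof (rule block_cycle_with_subaction[OF K_compact \<open>K \<noteq> {}\<close> T f P_part P_closed])
    fix p cyc x c h
    assume p: "1 \<le> p" and cyc: "inj_on cyc {..<p}" "\<And>k. k < p \<Longrightarrow> cyc k \<in> P"
      and x: "\<And>k. k < p \<Longrightarrow> x k \<in> cyc k" "\<And>k. k < p \<Longrightarrow> T (x k) \<in> cyc (Suc k mod p)"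
      and mean: "(\<Sum>k<p. f (x k)) = real p * c"
      and sub: "\<And>C D y. C \<in> P \<Longrightarrow> D \<in> P \<Longrightarrow> y \<in> C \<Longrightarrow> T y \<in> D \<Longrightarrow> f y \<le> c + h C - h D"
    \<comment> \<open>Within the block of x (k+1), move T (x k) onto x (k+1); these blocks are pairwise distinct.\<close>
    have "inj_on (\<lambda>k. cyc (Suc k mod p)) {..<p}"
      using comp_inj_on[OF bij_betw_imp_inj_on[OF bij_betw_Suc_mod[OF p]]]
        cyc(1) bij_betw_imp_surj_on[OF bij_betw_Suc_mod[OF p]] by (simp add: comp_def)
    then obtain \<sigma> \<sigma>' where \<sigma>: "homeomorphism K K \<sigma> \<sigma>'" "\<And>C y. C \<in> P \<Longrightarrow> y \<in> C \<Longrightarrow> \<sigma> y \<in> C"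
      and moves: "\<And>k. k < p \<Longrightarrow> \<sigma> (T (x k)) = x (Suc k mod p)"
      using homeomorphism_moving_points_in_blocks[OF K P, of "\<lambda>k. cyc (Suc k mod p)" "{..<p}"
          "\<lambda>k. T (x k)" "\<lambda>k. x (Suc k mod p)"] cyc(2) x p by auto
    have close: "dist y (\<sigma> y) < \<epsilon>" if "y \<in> K" for y
      using \<sigma>(2) clopen_partition_block(4)[OF P] partition_block_mem[OF P_part(2) that]
      unfolding diam_less_def by blast
    let ?T' = "\<sigma> \<circ> T"
    have "continuous_on K \<sigma>" "\<sigma> ` K = K"
      using \<sigma>(1) unfolding homeomorphism_def by auto
    then have T': "continuous_on K ?T'" "?T' ` K \<subseteq> K"
      using continuous_on_compose[OF T(1) continuous_on_subset] T(2) by fastforce+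
    define g where "g y = - h (partition_block P y)" for y
    have g: "continuous_on K g"
      unfolding g_def using continuous_on_partition_blockwise[OF P_part P_closed, of "\<lambda>C _. - h C"] by simp
    have subaction: "f y \<le> c + g (?T' y) - g y" if "y \<in> K" for y
    proof -
      let ?C = "partition_block P y" and ?D = "partition_block P (T y)"
      have "T y \<in> K" using T(2) that by blast
      then have D: "?D \<in> P" "T y \<in> ?D" using partition_block_mem[OF P_part(2)] by auto
      then have "?T' y \<in> ?D"
        using \<sigma>(2) by simp
      then have "partition_block P (?T' y) = ?D"
        by (rule partition_block_eq[OF P_part(2) D(1)])
      then show ?thesis
        using sub[OF partition_block_mem(1)[OF P_part(2) that] D(1) partition_block_mem(2)[OF P_part(2) that] D(2)]
        unfolding g_def by simp
    qed
    have orbit_K: "x k \<in> K" if "k < p" for k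
      using x(1)[OF that] cyc(2)[OF that] clopen_partition_block(3)[OF P] by blast
    have period: "?T' (x k) = x (Suc k mod p)" if "k < p" for k
      using moves[OF that] by simp
    have "\<exists>M. maximizing_measure K ?T' f M \<and> supported_on_periodic_orbit K ?T' M"
      by (rule maximizing_periodic_orbit_of_subaction[OF K_compact T' f g subaction p orbit_K period mean])
    then show thesis
      using that \<sigma>(1) close by blast
  qed
qed

theorem corollary1p1:
  fixes K :: "'a::metric_space set" and T :: "'a \<Rightarrow> 'a" and f :: "'a \<Rightarrow> real" and \<epsilon> :: real
  assumes "cantor_set K" and "continuous_on K f" and "\<epsilon> > 0"
  shows "(endomorphism K T \<longrightarrow> (\<exists>T'. endomorphism K T' \<and> (\<forall>x\<in>K. dist (T x) (T' x) < \<epsilon>) \<and>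
            (\<exists>M. maximizing_measure K T' f M \<and> supported_on_periodic_orbit K T' M)))
       \<and> (homeomorphism_of K T \<longrightarrow> (\<exists>T'. homeomorphism_of K T' \<and> (\<forall>x\<in>K. dist (T x) (T' x) < \<epsilon>) \<and>
            (\<exists>M. maximizing_measure K T' f M \<and> supported_on_periodic_orbit K T' M)))"
proof -
  have perturb: "\<exists>\<sigma> \<sigma>'. homeomorphism K K \<sigma> \<sigma>' \<and> (\<forall>x\<in>K. dist (T x) ((\<sigma> \<circ> T) x) < \<epsilon>) \<and>
      (\<exists>M. maximizing_measure K (\<sigma> \<circ> T) f M \<and> supported_on_periodic_orbit K (\<sigma> \<circ> T) M)"
    if "continuous_on K T" "T ` K = K"
    using perturbation_with_maximizing_periodic_orbit[OF assms(1) that(1) _ assms(2,3)] that(2)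
    by (metis (no_types, lifting) comp_apply image_eqI order_refl)
  have "endomorphism K (\<sigma> \<circ> T)" if "endomorphism K T" "homeomorphism K K \<sigma> \<sigma>'" for \<sigma> \<sigma>'
  proof -
    have "(\<sigma> \<circ> T) ` K = \<sigma> ` (T ` K)" by (rule image_comp[symmetric])
    then show ?thesis
      using that continuous_on_compose[of K T \<sigma>] unfolding endomorphism_def homeomorphism_def by simp
  qed
  moreover have "homeomorphism_of K (\<sigma> \<circ> T)" if "homeomorphism_of K T" "homeomorphism K K \<sigma> \<sigma>'" for \<sigma> \<sigma>'
    using that homeomorphism_compose unfolding homeomorphism_of_def by blast
  moreover have "continuous_on K T \<and> T ` K = K" if "endomorphism K T \<or> homeomorphism_of K T"
    using that unfolding endomorphism_def homeomorphism_of_def homeomorphism_def by auto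
  ultimately show ?thesis
    using perturb by meson
qed

end
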